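(* Let $x_0\in\mathbb{R}^d$, let $\beta\in\mathbb{R}$, let $(\alpha_k)_{k\ge 0}$ be nonzero step sizes, and let $\xi_0,\xi_1,\dots$ be a fixed sequence of samples. Consider the momentum method $$m_0=0,\qquad m_{k+1}=\beta m_k+(1-\beta)\nabla f(x_k,\xi_k),\qquad x_{k+1}=x_k-\alpha_k m_{k+1}\quad(k\ge 0),$$ and the iterate-averaging method $$x'_0=z_0=x_0,\qquad z_{k+1}=z_k-\eta_k\nabla f(x'_k,\xi_k),\qquad x'_{k+1}=(1-c_{k+1})x'_k+c_{k+1}z_{k+1}\quad(k\ge 0).$$ Suppose $c_1\in(0,1)$, that for all $k\ge 1$ $$c_{k+1}=\beta\,\frac{\alpha_k}{\alpha_{k-1}}\,\frac{c_k}{1-c_k},$$ and that for all $k\ge 0$ $$\eta_k=\frac{\alpha_k}{c_{k+1}}(1-\beta),$$ where all these quantities are assumed well defined (i.e. $c_k\notin\{0,1\}$ for all $k\ge1$). Then $x_k=x'_k$ for all $k\ge 0$.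
   Context: $\nabla f(x,\xi)$ denotes the (sub)gradient of $f(\cdot,\xi)$ at $x$ returned for sample $\xi$; both methods use the same samples $\xi_k$ at step $k$. No projection is involved (the constraint set is all of $\mathbb{R}^d$). *)

theory Defs
  imports "HOL-Analysis.Analysis"
begin

end

theory Submission
  imports Defs
begin

text \<open>The averaging method keeps its auxiliary sequence a fixed multiple of the momentum behind
  the momentum iterate: by induction, \<open>x' k = x k\<close> and
  \<open>z k = x k - (\<alpha> k \<beta> / c (k + 1)) m k\<close>. Given this, one gradient step on \<open>z\<close> lands at
  \<open>x k - (\<alpha> k / c (k + 1)) m (k + 1)\<close>, whose convex combination with \<open>x k\<close> is exactly the
  momentum step; the recursion for \<open>c\<close> is precisely what re-establishes the lag coefficient.\<close>

lemma lagged_gradient_step: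
  fixes x m v :: "'a::real_vector"
  shows "(x - (a * b / c) *\<^sub>R m) - (a / c * (1 - b)) *\<^sub>R v
           = x - (a / c) *\<^sub>R (b *\<^sub>R m + (1 - b) *\<^sub>R v)"
proof -
  have "(a / c) *\<^sub>R (b *\<^sub>R m + (1 - b) *\<^sub>R v)
          = (a * b / c) *\<^sub>R m + (a / c * (1 - b)) *\<^sub>R v"
    by (simp add: scaleR_add_right)
  then show ?thesis
    by (simp add: diff_diff_eq)
qed

lemma convex_step_toward_lagged_point:
  fixes x u :: "'a::real_vector"
  assumes "c \<noteq> 0"
  shows "(1 - c) *\<^sub>R x + c *\<^sub>R (x - (a / c) *\<^sub>R u) = x - a *\<^sub>R u"
    and "x - (a / c) *\<^sub>R u = (x - a *\<^sub>R u) - (a * (1 - c) / c) *\<^sub>R u"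
proof -
  have "c *\<^sub>R (x - (a / c) *\<^sub>R u) = c *\<^sub>R x - a *\<^sub>R u"
    using assms by (simp add: scaleR_diff_right)
  then show "(1 - c) *\<^sub>R x + c *\<^sub>R (x - (a / c) *\<^sub>R u) = x - a *\<^sub>R u"
    by (simp add: algebra_simps)
  have "a / c = a + a * (1 - c) / c"
    using assms by (simp add: field_simps)
  then show "x - (a / c) *\<^sub>R u = (x - a *\<^sub>R u) - (a * (1 - c) / c) *\<^sub>R u"
    by (metis diff_diff_eq scaleR_add_left)
qed

text \<open>No non-degeneracy hypothesis beyond \<open>c' \<noteq> 0\<close> is needed: it already forces
  \<open>a, a', b, c \<noteq> 0\<close> and \<open>c \<noteq> 1\<close>, since otherwise the right-hand side of the recursion is
  \<open>0\<close> (recall \<open>x / 0 = 0\<close>). For the same reason the theorem never uses \<open>alpha_nz\<close>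
  or \<open>c1\<close>.\<close>

lemma momentum_lag_recursion:
  fixes a a' b c c' :: real
  assumes rec: "c' = b * (a' / a) * (c / (1 - c))" and "c' \<noteq> 0"
  shows "a' * b / c' = a * (1 - c) / c"
proof -
  have "a \<noteq> 0" "a' \<noteq> 0" "b \<noteq> 0" "c \<noteq> 0" "1 - c \<noteq> 0"
    using \<open>c' \<noteq> 0\<close> unfolding rec by auto
  then show ?thesis
    unfolding rec by (simp add: field_simps)
qed

theorem theorem1:
  fixes g :: "real ^ 'n \<Rightarrow> 's \<Rightarrow> real ^ 'n"
    and \<xi> :: "nat \<Rightarrow> 's"
    and x0 :: "real ^ 'n"
    and \<beta> :: real
    and \<alpha> \<eta> c :: "nat \<Rightarrow> real"
    and x m x' z :: "nat \<Rightarrow> real ^ 'n"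
  assumes alpha_nz: "\<And>k. \<alpha> k \<noteq> 0"
    and m0: "m 0 = 0"
    and x0: "x 0 = x0"
    and m_step: "\<And>k. m (Suc k) = \<beta> *\<^sub>R m k + (1 - \<beta>) *\<^sub>R g (x k) (\<xi> k)"
    and x_step: "\<And>k. x (Suc k) = x k - \<alpha> k *\<^sub>R m (Suc k)"
    and x'0: "x' 0 = x0"
    and z0: "z 0 = x0"
    and z_step: "\<And>k. z (Suc k) = z k - \<eta> k *\<^sub>R g (x' k) (\<xi> k)"
    and x'_step: "\<And>k. x' (Suc k) = (1 - c (Suc k)) *\<^sub>R x' k + c (Suc k) *\<^sub>R z (Suc k)"
    and c1: "0 < c 1" "c 1 < 1"
    and c_wd: "\<And>k. k \<ge> 1 \<Longrightarrow> c k \<noteq> 0 \<and> c k \<noteq> 1"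
    and c_rec: "\<And>k. k \<ge> 1 \<Longrightarrow> c (Suc k) = \<beta> * (\<alpha> k / \<alpha> (k - 1)) * (c k / (1 - c k))"
    and eta_def: "\<And>k. \<eta> k = \<alpha> k / c (Suc k) * (1 - \<beta>)"
  shows "\<forall>k. x k = x' k"
proof -
  have c_nz: "c (Suc k) \<noteq> 0" for k
    using c_wd[of "Suc k"] by simp
  have "x' k = x k \<and> z k = x k - (\<alpha> k * \<beta> / c (Suc k)) *\<^sub>R m k" for k
  proof (induction k)
    case 0
    show ?case by (simp add: x0 x'0 z0 m0)
  next
    case (Suc k)
    have z_lagged: "z (Suc k) = x k - (\<alpha> k / c (Suc k)) *\<^sub>R m (Suc k)"
      using Suc.IH lagged_gradient_step[of "x k" "\<alpha> k" \<beta> "c (Suc k)" "m k"]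
      by (simp add: z_step eta_def m_step)
    have "x' (Suc k) = x (Suc k)"
      using Suc.IH convex_step_toward_lagged_point(1)[OF c_nz]
      by (simp add: x'_step z_lagged x_step)
    moreover have "\<alpha> (Suc k) * \<beta> / c (Suc (Suc k)) = \<alpha> k * (1 - c (Suc k)) / c (Suc k)"
      using momentum_lag_recursion[OF c_rec c_nz] by simp
    ultimately show ?case
      using convex_step_toward_lagged_point(2)[OF c_nz] by (simp add: z_lagged x_step)
  qed
  then show ?thesis by simp
qed

end
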